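(* Let $A=\begin{bmatrix}0&B\\0&C\end{bmatrix}$ (with $B^*B+C^*C=I$) be a unitarily irreducible nilpotent partial isometry with $C$ of size at most $4$. If $A$ has the Circularity property, then $C$ has the Circularity property.
   Context: A partial isometry is a matrix $A$ with $\|Ax\|=\|x\|$ for all $x\perp\ker A$; every partial isometry with nontrivial kernel is unitarily similar to a matrix $\begin{bmatrix}0&B\\0&C\end{bmatrix}$ on $\mathbb{C}^m\oplus\mathbb{C}^d$ with $m=\dim\ker A$ and $B^*B+C^*C=I_d$. A matrix is unitarily irreducible if it is not unitarily similar to a direct sum of two matrices of smaller size. For $X\in M_n$, $H_X(\theta)=\frac12(e^{-i\theta}X+e^{i\theta}X^* )$; $X$ has the Circularity property if the spectrum of $H_X(\theta)$ is independent of $\theta\in\mathbb{R}$. *)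

theory Defs
  imports "Jordan_Normal_Form.Spectral_Radius" "Jordan_Normal_Form.Schur_Decomposition"
begin

definition unitary_mat :: "complex mat \<Rightarrow> bool" where
  "unitary_mat U \<longleftrightarrow> square_mat U \<and> mat_adjoint U * U = 1\<^sub>m (dim_row U)"

definition unitarily_irreducible :: "complex mat \<Rightarrow> bool" where
  "unitarily_irreducible X \<longleftrightarrow> square_mat X \<and>
     \<not> (\<exists>U X1 X2 n1 n2. n1 > 0 \<and> n2 > 0 \<and> n1 + n2 = dim_row X \<and>
          unitary_mat U \<and> U \<in> carrier_mat (dim_row X) (dim_row X) \<and>
          X1 \<in> carrier_mat n1 n1 \<and> X2 \<in> carrier_mat n2 n2 \<and>
          mat_adjoint U * X * U = four_block_mat X1 (0\<^sub>m n1 n2) (0\<^sub>m n2 n1) X2)"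

definition nilpotent_mat :: "complex mat \<Rightarrow> bool" where
  "nilpotent_mat X \<longleftrightarrow> square_mat X \<and> (\<exists>k. X ^\<^sub>m k = 0\<^sub>m (dim_row X) (dim_row X))"

definition herm_part :: "complex mat \<Rightarrow> real \<Rightarrow> complex mat" where
  "herm_part X \<theta> = (1/2 :: complex) \<cdot>\<^sub>m
     ((cis (-\<theta>)) \<cdot>\<^sub>m X + (cis \<theta>) \<cdot>\<^sub>m mat_adjoint X)"

definition circularity :: "complex mat \<Rightarrow> bool" where
  "circularity X \<longleftrightarrow> (\<forall>\<theta>1 \<theta>2. spectrum (herm_part X \<theta>1) = spectrum (herm_part X \<theta>2))"

end

(*
  tr (H_X(theta)^k) is a trigonometric polynomial in theta: its coefficient at e^{i(2j-k)theta} is,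
  up to the factor 2^-k, the sum c_{k,j}(X) of the traces of all words of length k in X and X^*
  with j letters X^*. Under Circularity the traces of the powers of H_X(theta) take only finitely
  many values, which forces c_{k,j}(X) = 0 whenever 2j ~= k. Conversely, if X has size at most 4
  and c_{k,j}(X) = 0 for all k <= 4 and 2j ~= k, then the traces of the first four powers of
  H_X(theta) do not depend on theta, hence neither does its characteristic polynomial (Newton's
  identities).

  For nilpotent C, cyclic rotation and conjugation of words reduce the unbalanced c_{k,j}(C) with
  k <= 4 to traces of powers of C and to tr(C^* C^2), tr(C^* C^3). These two vanish by the
  Circularity of A: as A^* A^(p+1) is the block diagonal matrix diag(0, C^p), counting rotations
  gives 2 c_{k+3,2}(A) = (k+3) (2 tr(C^* C^k) + k tr(C^(k-1))).
*)

theory Submission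
  imports Defs
begin

section \<open>Adjoints, traces and eigenvalues\<close>

lemma dim_mat_adjoint[simp]:
  "dim_row (mat_adjoint M) = dim_col M" "dim_col (mat_adjoint M) = dim_row M"
  by (simp_all add: mat_adjoint_def)

lemma index_mat_adjoint[simp]:
  "i < dim_col M \<Longrightarrow> j < dim_row M \<Longrightarrow> mat_adjoint M $$ (i,j) = conjugate (M $$ (j,i))"
  by (simp add: mat_adjoint_def mat_of_rows_def)

lemma mat_adjoint_carrier[simp]: "M \<in> carrier_mat n k \<Longrightarrow> mat_adjoint M \<in> carrier_mat k n"
  by (intro carrier_matI) auto

lemma mat_adjoint_adjoint[simp]: "mat_adjoint (mat_adjoint M) = M"
  by (rule eq_matI) auto

lemma conjugate_one[simp]: "conjugate (1 :: 'a::conjugatable_field) = 1"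
proof -
  have "conjugate 1 * conjugate 1 = (conjugate 1 :: 'a)"
    by (metis conjugate_dist_mul mult_1_left)
  then show ?thesis
    by (metis conjugate_zero_iff mult_cancel_left2 one_neq_zero)
qed

lemma mat_adjoint_one[simp]: "mat_adjoint (1\<^sub>m n) = (1\<^sub>m n :: 'a::conjugatable_field mat)"
  by (rule eq_matI) auto

lemma mat_adjoint_zero[simp]: "mat_adjoint (0\<^sub>m n k) = (0\<^sub>m k n :: 'a::conjugatable_field mat)"
  by (rule eq_matI) auto

lemma mat_adjoint_mult:
  fixes A B :: "'a::conjugatable_field mat"
  assumes "A \<in> carrier_mat n k" "B \<in> carrier_mat k l"
  shows "mat_adjoint (A * B) = mat_adjoint B * mat_adjoint A"
proof (rule eq_matI)
  fix i j assume ij: "i < dim_row (mat_adjoint B * mat_adjoint A)" "j < dim_col (mat_adjoint B * mat_adjoint A)"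
  have "mat_adjoint (A * B) $$ (i, j) = conjugate (\<Sum>x<k. A $$ (j,x) * B $$ (x,i))"
    using assms ij by (simp add: scalar_prod_def lessThan_atLeast0)
  also have "\<dots> = (\<Sum>x<k. conjugate (B $$ (x,i)) * conjugate (A $$ (j,x)))"
    by (simp add: sum_conjugate conjugate_dist_mul mult.commute)
  also have "\<dots> = (mat_adjoint B * mat_adjoint A) $$ (i, j)"
    using assms ij by (simp add: scalar_prod_def lessThan_atLeast0)
  finally show "mat_adjoint (A * B) $$ (i, j) = (mat_adjoint B * mat_adjoint A) $$ (i, j)" .
qed (use assms in auto)

lemma mat_adjoint_four_block_mat:
  fixes A1 A2 A3 A4 :: "'a::conjugatable_field mat"
  assumes "A1 \<in> carrier_mat n1 k1" "A2 \<in> carrier_mat n1 k2"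
    and "A3 \<in> carrier_mat n2 k1" "A4 \<in> carrier_mat n2 k2"
  shows "mat_adjoint (four_block_mat A1 A2 A3 A4) =
    four_block_mat (mat_adjoint A1) (mat_adjoint A3) (mat_adjoint A2) (mat_adjoint A4)"
  by (rule eq_matI) (use assms in auto)

definition trace :: "'a::comm_monoid_add mat \<Rightarrow> 'a" where
  "trace M = (\<Sum>i<dim_row M. M $$ (i,i))"

lemma trace_mult_comm:
  fixes A B :: "'a::comm_semiring_0 mat"
  assumes "A \<in> carrier_mat n k" "B \<in> carrier_mat k n"
  shows "trace (A * B) = trace (B * A)"
proof -
  have "trace (A * B) = (\<Sum>i<n. \<Sum>l<k. A $$ (i,l) * B $$ (l,i))"
    unfolding trace_def using assms by (auto simp: scalar_prod_def lessThan_atLeast0 intro!: sum.cong)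
  also have "\<dots> = (\<Sum>l<k. \<Sum>i<n. B $$ (l,i) * A $$ (i,l))"
    by (subst sum.swap) (simp add: mult.commute)
  also have "\<dots> = trace (B * A)"
    unfolding trace_def using assms by (auto simp: scalar_prod_def lessThan_atLeast0 intro!: sum.cong)
  finally show ?thesis .
qed

lemma trace_mat_adjoint: "M \<in> carrier_mat n n \<Longrightarrow> trace (mat_adjoint M) = conjugate (trace M)"
  by (simp add: trace_def sum_conjugate)

lemma upper_triangular_mult:
  fixes U V :: "'a::semiring_0 mat"
  assumes U: "U \<in> carrier_mat n n" and V: "V \<in> carrier_mat n n"
    and "upper_triangular U" "upper_triangular V"
  shows "upper_triangular (U * V)"
    and "i < n \<Longrightarrow> (U * V) $$ (i,i) = U $$ (i,i) * V $$ (i,i)"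
proof -
  have zero: "U $$ (i,l) * V $$ (l,j) = 0" if "i < n" "l < n" "j < i \<or> j = i \<and> l \<noteq> i" for i j l
    using that assms by (cases "l < i") (auto simp: upper_triangular_def)
  show "upper_triangular (U * V)"
  proof (rule upper_triangularI)
    fix i j assume "j < i" "i < dim_row (U * V)"
    then show "(U * V) $$ (i,j) = 0"
      using U V zero by (simp add: scalar_prod_def)
  qed
  show "(U * V) $$ (i,i) = U $$ (i,i) * V $$ (i,i)" if "i < n"
  proof -
    have "(U * V) $$ (i,i) = (\<Sum>l\<in>{0..<n}. U $$ (i,l) * V $$ (l,i))"
      using U V that by (simp add: scalar_prod_def)
    also have "\<dots> = U $$ (i,i) * V $$ (i,i)"
      using that zero[of i _ i] by (subst sum.remove[of _ i]) auto
    finally show ?thesis .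
  qed
qed

lemma upper_triangular_pow:
  fixes U :: "'a::comm_semiring_1 mat"
  assumes U: "U \<in> carrier_mat n n" and "upper_triangular U"
  shows "upper_triangular (U ^\<^sub>m k)" and "i < n \<Longrightarrow> (U ^\<^sub>m k) $$ (i,i) = U $$ (i,i) ^ k"
proof -
  have "upper_triangular (U ^\<^sub>m k) \<and> (\<forall>i<n. (U ^\<^sub>m k) $$ (i,i) = U $$ (i,i) ^ k)"
  proof (induction k)
    case (Suc k)
    then show ?case
      using upper_triangular_mult[OF pow_carrier_mat[OF U] U _ assms(2)] by (simp add: mult.commute)
  qed (use U in auto)
  then show "upper_triangular (U ^\<^sub>m k)" "i < n \<Longrightarrow> (U ^\<^sub>m k) $$ (i,i) = U $$ (i,i) ^ k"
    by auto
qed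

lemma trace_pow_eq_sum_eigenvalues:
  fixes M :: "'a::conjugatable_ordered_field mat"
  assumes M: "M \<in> carrier_mat n n" and cp: "char_poly M = (\<Prod>e\<leftarrow>es. [:- e, 1:])"
  shows "trace (M ^\<^sub>m k) = (\<Sum>e\<leftarrow>es. e ^ k)"
proof -
  obtain U P Q where schur: "schur_decomposition M es = (U, P, Q)"
    by (cases "schur_decomposition M es")
  with schur_decomposition[OF M cp] have sim: "similar_mat_wit M U P Q"
    and ut: "upper_triangular U" and diag: "diag_mat U = es" by auto
  from sim M have U: "U \<in> carrier_mat n n" and P: "P \<in> carrier_mat n n"
    and Q: "Q \<in> carrier_mat n n" and QP: "Q * P = 1\<^sub>m n"
    unfolding similar_mat_wit_def Let_def by auto
  have "trace (M ^\<^sub>m k) = trace (P * U ^\<^sub>m k * Q)"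
    by (simp add: similar_mat_wit_pow_id[OF sim])
  also have "\<dots> = trace (Q * P * U ^\<^sub>m k)"
    using trace_mult_comm[of "P * U ^\<^sub>m k" n n Q] assoc_mult_mat[OF Q P pow_carrier_mat[OF U]] P Q U
    by simp
  also have "\<dots> = trace (U ^\<^sub>m k)"
    using U by (simp add: QP)
  also have "\<dots> = (\<Sum>i<n. U $$ (i,i) ^ k)"
    unfolding trace_def using U upper_triangular_pow(2)[OF U ut] by simp
  also have "\<dots> = (\<Sum>e\<leftarrow>es. e ^ k)"
    using U unfolding diag[symmetric] diag_mat_def
    by (simp add: sum_list_sum_nth lessThan_atLeast0)
  finally show ?thesis .
qed

lemma spectrum_eq_set_if_char_poly_factorized:
  fixes M :: "'a::field mat"
  assumes "M \<in> carrier_mat n n" and "char_poly M = (\<Prod>e\<leftarrow>es. [:- e, 1:])"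
  shows "spectrum M = set es"
  unfolding spectrum_root_char_poly[OF assms(1)] assms(2)
  by (induction es) (auto simp: poly_prod_list)

lemma nilpotent_eigenvalue_eq_0:
  fixes M :: "'a::field mat"
  assumes M: "M \<in> carrier_mat n n" and nil: "M ^\<^sub>m k = 0\<^sub>m n n" and "e \<in> spectrum M"
  shows "e = 0"
proof -
  obtain v where v: "eigenvector M v e"
    using assms(3) unfolding spectrum_def eigenvalue_def by auto
  then have "v \<in> carrier_vec n" "v \<noteq> 0\<^sub>v n"
    using M unfolding eigenvector_def by auto
  then obtain i where i: "i < n" "v $ i \<noteq> 0"
    by (metis carrier_vecD eq_vecI index_zero_vec(1,2))
  have "e ^ k \<cdot>\<^sub>v v = 0\<^sub>m n n *\<^sub>v v"
    using eigenvector_pow[OF M v, of k] nil by simp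
  then have "e ^ k * v $ i = (0\<^sub>m n n *\<^sub>v v) $ i"
    using i \<open>v \<in> carrier_vec n\<close> by (metis carrier_vecD index_smult_vec(1))
  also have "\<dots> = 0"
    using i \<open>v \<in> carrier_vec n\<close> by (simp add: scalar_prod_def)
  finally have "e ^ k * v $ i = 0" .
  then show ?thesis
    using i by simp
qed

lemma trace_pow_eq_0_if_nilpotent:
  fixes M :: "complex mat"
  assumes M: "M \<in> carrier_mat n n" and nil: "M ^\<^sub>m k = 0\<^sub>m n n" and "j > 0"
  shows "trace (M ^\<^sub>m j) = 0"
proof -
  obtain es where cp: "char_poly M = (\<Prod>e\<leftarrow>es. [:- e, 1:])"
    using char_poly_factorized[OF M] by auto
  have "\<forall>e\<in>set es. e = 0"
    using spectrum_eq_set_if_char_poly_factorized[OF M cp] nilpotent_eigenvalue_eq_0[OF M nil] by auto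
  then have "(\<Sum>e\<leftarrow>es. e ^ j) = 0"
    using \<open>j > 0\<close> by (induction es) auto
  then show ?thesis
    using trace_pow_eq_sum_eigenvalues[OF M cp] by simp
qed

lemma newton_identity_4:
  fixes xs :: "'a::comm_ring_1 list"
  assumes "length xs = 4"
  defines "p k \<equiv> \<Sum>x\<leftarrow>xs. x ^ k"
  shows "24 * (\<Prod>x\<leftarrow>xs. z - x) =
    24 * z ^ 4 - 24 * p 1 * z ^ 3 + 12 * (p 1 ^ 2 - p 2) * z ^ 2
    - 4 * (p 1 ^ 3 - 3 * p 1 * p 2 + 2 * p 3) * z
    + (p 1 ^ 4 - 6 * p 1 ^ 2 * p 2 + 3 * p 2 ^ 2 + 8 * p 1 * p 3 - 6 * p 4)"
proof -
  obtain a b c e where "xs = [a, b, c, e]"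
    using assms(1) by (auto simp: length_Suc_conv eval_nat_numeral)
  then show ?thesis
    unfolding p_def by (simp add: algebra_simps power2_eq_square power3_eq_cube power4_eq_xxxx)
qed

lemma prod_linear_factors_eq_if_power_sums_eq:
  fixes xs ys :: "'a::field_char_0 list"
  assumes len: "length xs = n" "length ys = n" "n \<le> 4"
    and sums: "\<And>k. 1 \<le> k \<Longrightarrow> k \<le> 4 \<Longrightarrow> (\<Sum>x\<leftarrow>xs. x ^ k) = (\<Sum>y\<leftarrow>ys. y ^ k)"
  shows "(\<Prod>x\<leftarrow>xs. [:- x, 1:]) = (\<Prod>y\<leftarrow>ys. [:- y, 1:])"
proof -
  define pad where "pad zs = zs @ replicate (4 - n) (0 :: 'a)" for zs
  have pad_sums: "(\<Sum>x\<leftarrow>pad xs. x ^ k) = (\<Sum>y\<leftarrow>pad ys. y ^ k)" if "k \<in> {1, 2, 3, 4}" for k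
    using sums[of k] that by (auto simp: pad_def)
  have "poly (\<Prod>x\<leftarrow>pad xs. [:- x, 1:]) z = poly (\<Prod>y\<leftarrow>pad ys. [:- y, 1:]) z" for z
  proof -
    have poly_prod: "poly (\<Prod>x\<leftarrow>zs. [:- x, 1:]) z = (\<Prod>x\<leftarrow>zs. z - x)" for zs
      by (induction zs) (auto simp: algebra_simps)
    have "length (pad xs) = 4" "length (pad ys) = 4"
      using len by (simp_all add: pad_def)
    moreover have "(\<Sum>x\<leftarrow>pad xs. x ^ 1) = (\<Sum>y\<leftarrow>pad ys. y ^ 1)"
      "(\<Sum>x\<leftarrow>pad xs. x ^ 2) = (\<Sum>y\<leftarrow>pad ys. y ^ 2)"
      "(\<Sum>x\<leftarrow>pad xs. x ^ 3) = (\<Sum>y\<leftarrow>pad ys. y ^ 3)"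
      "(\<Sum>x\<leftarrow>pad xs. x ^ 4) = (\<Sum>y\<leftarrow>pad ys. y ^ 4)"
      by (rule pad_sums, simp)+
    ultimately have "24 * (\<Prod>x\<leftarrow>pad xs. z - x) = 24 * (\<Prod>y\<leftarrow>pad ys. z - y)"
      using newton_identity_4[of "pad xs" z] newton_identity_4[of "pad ys" z] by simp_all
    then show ?thesis
      unfolding poly_prod by simp
  qed
  then have "(\<Prod>x\<leftarrow>pad xs. [:- x, 1:]) = (\<Prod>y\<leftarrow>pad ys. [:- y, 1:])"
    by (intro poly_eq_poly_eq_iff[THEN iffD1] ext)
  then have "(\<Prod>x\<leftarrow>xs. [:- x, 1:]) * [:0, 1:] ^ (4 - n) = (\<Prod>y\<leftarrow>ys. [:- y, 1:]) * [:0, 1:] ^ (4 - n)"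
    by (simp add: pad_def)
  then show ?thesis
    by simp
qed

lemma char_poly_eq_if_trace_pow_eq:
  fixes M N :: "complex mat"
  assumes M: "M \<in> carrier_mat n n" and N: "N \<in> carrier_mat n n" and "n \<le> 4"
    and traces: "\<And>k. 1 \<le> k \<Longrightarrow> k \<le> 4 \<Longrightarrow> trace (M ^\<^sub>m k) = trace (N ^\<^sub>m k)"
  shows "char_poly M = char_poly N"
proof -
  obtain xs where xs: "char_poly M = (\<Prod>x\<leftarrow>xs. [:- x, 1:])" "length xs = n"
    using char_poly_factorized[OF M] by auto
  obtain ys where ys: "char_poly N = (\<Prod>y\<leftarrow>ys. [:- y, 1:])" "length ys = n"
    using char_poly_factorized[OF N] by auto
  show ?thesis
    unfolding xs(1) ys(1)
    by (rule prod_linear_factors_eq_if_power_sums_eq[OF xs(2) ys(2) \<open>n \<le> 4\<close>])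
      (use traces trace_pow_eq_sum_eigenvalues[OF M xs(1)] trace_pow_eq_sum_eigenvalues[OF N ys(1)] in auto)
qed

section \<open>Words in a matrix and its adjoint\<close>

lemma pow_mat_Suc_left: "X \<in> carrier_mat n n \<Longrightarrow> X ^\<^sub>m Suc k = X * X ^\<^sub>m k"
proof (induction k)
  case (Suc k)
  then have "X * X ^\<^sub>m Suc k = X ^\<^sub>m Suc k * X"
    using assoc_mult_mat[OF Suc.prems pow_carrier_mat[OF Suc.prems] Suc.prems] by simp
  then show ?case
    by simp
qed simp

lemma pow_mat_add: "X \<in> carrier_mat n n \<Longrightarrow> X ^\<^sub>m i * X ^\<^sub>m j = X ^\<^sub>m (i + j)"
proof (induction j)
  case (Suc j)
  then show ?case
    by (simp add: assoc_mult_mat[of _ n n _ n _ n, symmetric])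
qed simp

lemma count_list_True_False: "count_list bs True + count_list bs False = length bs"
  by (induction bs) auto

lemma count_list_le_length: "count_list xs x \<le> length xs"
  by (induction xs) auto

lemma count_list_rotate: "count_list (rotate i xs) x = count_list xs x"
  by (metis append_take_drop_id count_list_append rotate_drop_take add.commute)

lemma eq_replicate_True_if_False_notin: "False \<notin> set bs \<Longrightarrow> bs = replicate (length bs) True"
  by (intro replicate_eqI) (auto, metis (full_types))

lemma bool_lists_without_False: "{bs. length bs = k \<and> count_list bs False = 0} = {replicate k True}"
  by (auto simp: count_list_0_iff dest: eq_replicate_True_if_False_notin)

lemma sum_bool_lists_length_Suc:
  "(\<Sum>bs | length bs = Suc k. f bs) = (\<Sum>bs | length bs = k. f (True # bs) + f (False # bs))"
proof -
  let ?L = "{bs :: bool list. length bs = k}"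
  have fin: "finite ?L"
    using finite_lists_length_eq[of "UNIV :: bool set" k] by simp
  have "{bs :: bool list. length bs = Suc k} = Cons True ` ?L \<union> Cons False ` ?L"
    by (auto simp: length_Suc_conv image_iff)
  then have "(\<Sum>bs | length bs = Suc k. f bs) = sum f (Cons True ` ?L \<union> Cons False ` ?L)"
    by simp
  also have "\<dots> = sum f (Cons True ` ?L) + sum f (Cons False ` ?L)"
    using fin by (intro sum.union_disjoint) auto
  also have "\<dots> = (\<Sum>bs | length bs = k. f (True # bs) + f (False # bs))"
    by (simp add: sum.reindex sum.distrib)
  finally show ?thesis .
qed

lemma sum_bool_lists_one_False:
  "(\<Sum>bs | length bs = Suc k \<and> count_list bs False = 1. f bs) =
    (\<Sum>p\<le>k. f (replicate p True @ False # replicate (k - p) True))"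
proof -
  let ?w = "\<lambda>p. replicate p True @ False # replicate (k - p) True"
  have "\<exists>p\<le>k. bs = ?w p" if len: "length bs = Suc k" and count: "count_list bs False = 1" for bs
  proof -
    obtain us vs where bs: "bs = us @ False # vs" and "False \<notin> set us"
      using count split_list_first[of False bs] count_notin[of False bs] by force
    moreover have "False \<notin> set vs"
      using count bs by (auto simp: count_list_0_iff)
    ultimately have "bs = replicate (length us) True @ False # replicate (length vs) True"
      using bs eq_replicate_True_if_False_notin by metis
    moreover have "length vs = k - length us" "length us \<le> k"
      using len bs by simp_all
    ultimately show ?thesis
      by auto
  qed
  moreover have index_w: "length (takeWhile id (replicate p True @ False # ys)) = p" for p ys
    by (induction p) auto
  ultimately have "bs = ?w (length (takeWhile id bs)) \<and> length (takeWhile id bs) \<le> k"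
    if "length bs = Suc k" "count_list bs False = 1" for bs
    using that by force
  then show ?thesis
    by (intro sum.reindex_bij_witness[where i = ?w and j = "\<lambda>bs. length (takeWhile id bs)"])
      (auto simp: index_w count_list_append)
qed

fun word_mat :: "nat \<Rightarrow> 'a::semiring_1 mat \<Rightarrow> 'a mat \<Rightarrow> bool list \<Rightarrow> 'a mat" where
  "word_mat n X Y [] = 1\<^sub>m n"
| "word_mat n X Y (b # bs) = (if b then X else Y) * word_mat n X Y bs"

context
  fixes X Y :: "'a::semiring_1 mat" and n :: nat
  assumes X: "X \<in> carrier_mat n n" and Y: "Y \<in> carrier_mat n n"
begin

lemma word_mat_carrier[simp]: "word_mat n X Y bs \<in> carrier_mat n n"
  using X Y by (induction bs) auto

lemma dim_word_mat[simp]: "dim_row (word_mat n X Y bs) = n" "dim_col (word_mat n X Y bs) = n"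
  using word_mat_carrier carrier_matD by blast+

lemma word_mat_append: "word_mat n X Y (bs @ cs) = word_mat n X Y bs * word_mat n X Y cs"
proof (induction bs)
  case (Cons b bs)
  have "(if b then X else Y) \<in> carrier_mat n n"
    using X Y by simp
  with Cons show ?case
    by (simp add: assoc_mult_mat[of _ n n _ n _ n])
qed (simp add: left_mult_one_mat[OF word_mat_carrier])

lemma word_mat_replicate_True: "word_mat n X Y (replicate k True) = X ^\<^sub>m k"
  using X by (induction k) (simp_all add: pow_mat_Suc_left[OF X, symmetric])

end

lemma index_pow_linear_combination:
  fixes X Y :: "'a::comm_semiring_1 mat"
  assumes X: "X \<in> carrier_mat n n" and Y: "Y \<in> carrier_mat n n" and "i < n" "j < n"
  shows "((a \<cdot>\<^sub>m X + c \<cdot>\<^sub>m Y) ^\<^sub>m k) $$ (i,j) =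
    (\<Sum>bs | length bs = k. a ^ count_list bs True * c ^ count_list bs False * word_mat n X Y bs $$ (i,j))"
  using \<open>i < n\<close>
proof (induction k arbitrary: i)
  case 0
  then show ?case
    using X Y by simp
next
  case (Suc k)
  let ?P = "a \<cdot>\<^sub>m X + c \<cdot>\<^sub>m Y"
  let ?w = "\<lambda>bs. word_mat n X Y bs" and ?coeff = "\<lambda>bs. a ^ count_list bs True * c ^ count_list bs False"
  have P: "?P \<in> carrier_mat n n"
    using X Y by simp
  have "(?P ^\<^sub>m Suc k) $$ (i,j) = (\<Sum>l<n. ?P $$ (i,l) * (?P ^\<^sub>m k) $$ (l,j))"
    unfolding pow_mat_Suc_left[OF P] using X Y Suc.prems \<open>j < n\<close>
    by (simp add: scalar_prod_def lessThan_atLeast0)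
  also have "\<dots> = (\<Sum>l<n. (a * X $$ (i,l) + c * Y $$ (i,l)) * (\<Sum>bs | length bs = k. ?coeff bs * ?w bs $$ (l,j)))"
    using X Y Suc by simp
  also have "\<dots> = (\<Sum>bs | length bs = k. ?coeff bs * (a * (\<Sum>l<n. X $$ (i,l) * ?w bs $$ (l,j)))
      + ?coeff bs * (c * (\<Sum>l<n. Y $$ (i,l) * ?w bs $$ (l,j))))"
    by (simp add: sum_distrib_left sum_distrib_right sum.distrib algebra_simps sum.swap[of _ "{..<n}"])
  also have "\<dots> = (\<Sum>bs | length bs = k. ?coeff (True # bs) * ?w (True # bs) $$ (i,j)
      + ?coeff (False # bs) * ?w (False # bs) $$ (i,j))"
    using X Y Suc.prems \<open>j < n\<close> by (simp add: scalar_prod_def lessThan_atLeast0 algebra_simps)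
  also have "\<dots> = (\<Sum>bs | length bs = Suc k. ?coeff bs * ?w bs $$ (i,j))"
    by (rule sum_bool_lists_length_Suc[symmetric])
  finally show ?case .
qed

lemma trace_pow_linear_combination:
  fixes X Y :: "'a::comm_semiring_1 mat"
  assumes X: "X \<in> carrier_mat n n" and Y: "Y \<in> carrier_mat n n"
  shows "trace ((a \<cdot>\<^sub>m X + c \<cdot>\<^sub>m Y) ^\<^sub>m k) =
    (\<Sum>bs | length bs = k. a ^ count_list bs True * c ^ count_list bs False * trace (word_mat n X Y bs))"
  unfolding trace_def using X Y
  by (simp add: index_pow_linear_combination[OF X Y] sum_distrib_left sum.swap[of _ "{..<n}"])

lemma trace_word_mat_rotate:
  fixes X Y :: "'a::comm_semiring_1 mat"
  assumes X: "X \<in> carrier_mat n n" and Y: "Y \<in> carrier_mat n n"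
  shows "trace (word_mat n X Y (rotate i bs)) = trace (word_mat n X Y bs)"
proof -
  let ?u = "take (i mod length bs) bs" and ?v = "drop (i mod length bs) bs"
  have "trace (word_mat n X Y (rotate i bs)) = trace (word_mat n X Y ?v * word_mat n X Y ?u)"
    by (simp add: rotate_drop_take word_mat_append[OF X Y])
  also have "\<dots> = trace (word_mat n X Y ?u * word_mat n X Y ?v)"
    using trace_mult_comm[OF word_mat_carrier[OF X Y] word_mat_carrier[OF X Y]] .
  also have "\<dots> = trace (word_mat n X Y bs)"
    by (simp add: word_mat_append[OF X Y, symmetric])
  finally show ?thesis .
qed

lemma mat_adjoint_word_mat:
  fixes X :: "'a::conjugatable_field mat"
  assumes X: "X \<in> carrier_mat n n"
  shows "mat_adjoint (word_mat n X (mat_adjoint X) bs) = word_mat n X (mat_adjoint X) (rev (map Not bs))"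
proof (induction bs)
  case (Cons b bs)
  have X': "mat_adjoint X \<in> carrier_mat n n"
    using X by simp
  have "mat_adjoint (word_mat n X (mat_adjoint X) (b # bs)) =
      word_mat n X (mat_adjoint X) (rev (map Not bs)) * word_mat n X (mat_adjoint X) [\<not> b]"
    using Cons X X' by (simp add: mat_adjoint_mult[of _ n n _ n] right_mult_one_mat[of _ n n])
  then show ?case
    by (simp add: word_mat_append[OF X X'])
qed simp

section \<open>Trace coefficients of the Hermitian parts\<close>

text \<open>The coefficient of e^{i(2j-k)\<theta>} in 2^k tr(H_X(\<theta>)^k); in a word, True stands for X and
  False for X^*.\<close>

definition herm_trace_coeff :: "complex mat \<Rightarrow> nat \<Rightarrow> nat \<Rightarrow> complex" where
  "herm_trace_coeff X k j = (\<Sum>bs | length bs = k \<and> count_list bs False = j.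
     trace (word_mat (dim_row X) X (mat_adjoint X) bs))"

lemma herm_part_eq_linear_combination:
  "X \<in> carrier_mat n n \<Longrightarrow> herm_part X \<theta> = (cis (- \<theta>) / 2) \<cdot>\<^sub>m X + (cis \<theta> / 2) \<cdot>\<^sub>m mat_adjoint X"
  by (rule eq_matI) (auto simp: herm_part_def algebra_simps)

lemma trace_herm_part_pow:
  assumes X: "X \<in> carrier_mat n n"
  shows "2 ^ k * cis \<theta> ^ k * trace (herm_part X \<theta> ^\<^sub>m k) =
    (\<Sum>j\<le>k. herm_trace_coeff X k j * cis \<theta> ^ (2 * j))"
proof -
  let ?t = "\<lambda>bs. trace (word_mat n X (mat_adjoint X) bs)"
  let ?W = "{bs :: bool list. length bs = k}"
  have fin: "finite ?W"
    using finite_lists_length_eq[of "UNIV :: bool set" k] by simp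
  have weight: "2 ^ k * cis \<theta> ^ k * ((cis (- \<theta>) / 2) ^ count_list bs True * (cis \<theta> / 2) ^ count_list bs False)
      = cis \<theta> ^ (2 * count_list bs False)" if "bs \<in> ?W" for bs
  proof -
    have k: "k = count_list bs True + count_list bs False"
      using that count_list_True_False[of bs] by simp
    have "2 ^ (a + b) * z ^ (a + b) * ((w / 2) ^ a * (z / 2) ^ b) = (z * w) ^ a * z ^ (2 * b)"
      for z w :: complex and a b :: nat
      by (simp add: power_add power_divide power_mult_distrib mult_2)
    from this[where z = "cis \<theta>" and w = "cis (- \<theta>)" and a = "count_list bs True" and b = "count_list bs False"]
    show ?thesis
      unfolding k by (simp add: cis_mult)
  qed
  have "2 ^ k * cis \<theta> ^ k * trace (herm_part X \<theta> ^\<^sub>m k) = (\<Sum>bs\<in>?W.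
      (2 ^ k * cis \<theta> ^ k * ((cis (- \<theta>) / 2) ^ count_list bs True * (cis \<theta> / 2) ^ count_list bs False)) * ?t bs)"
    unfolding herm_part_eq_linear_combination[OF X] trace_pow_linear_combination[OF X mat_adjoint_carrier[OF X]]
    by (simp add: sum_distrib_left mult.assoc)
  also have "\<dots> = (\<Sum>bs\<in>?W. cis \<theta> ^ (2 * count_list bs False) * ?t bs)"
    by (rule sum.cong) (simp_all add: weight)
  also have "\<dots> = (\<Sum>j\<le>k. \<Sum>bs | bs \<in> ?W \<and> count_list bs False = j.
      cis \<theta> ^ (2 * count_list bs False) * ?t bs)"
    using fin count_list_le_length[of _ False]
    by (intro sum.group[symmetric]) auto
  also have "\<dots> = (\<Sum>j\<le>k. herm_trace_coeff X k j * cis \<theta> ^ (2 * j))"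
    using X by (simp add: herm_trace_coeff_def sum_distrib_left ac_simps)
  finally show ?thesis .
qed

lemma infinite_range_cis: "infinite (range cis)"
proof
  assume "finite (range cis)"
  then have "finite (cis ` {0..pi})"
    by (rule finite_subset[rotated]) auto
  moreover have "inj_on cis {0..pi}"
    by (rule inj_onI) (metis atLeastAtMost_iff cis.sel(1) cos_inj_pi)
  ultimately have "finite {0..pi}"
    using finite_imageD by blast
  then show False
    using infinite_Icc[OF pi_gt_zero] by simp
qed

lemma coeff_eq_0_if_finite_values_on_circle:
  fixes p :: "complex poly"
  assumes fin: "finite (range (\<lambda>\<theta>. poly p (cis \<theta>) / cis \<theta> ^ k))" and "i \<noteq> k"
  shows "coeff p i = 0"
proof -
  let ?F = "range (\<lambda>\<theta>. poly p (cis \<theta>) / cis \<theta> ^ k)"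
  have "\<exists>v. p = monom v k"
  proof (rule ccontr)
    assume not_monom: "\<nexists>v. p = monom v k"
    have "range cis \<subseteq> (\<Union>v\<in>?F. {z. poly (p - monom v k) z = 0})"
    proof
      fix z assume "z \<in> range cis"
      then obtain \<theta> where z: "z = cis \<theta>" by blast
      then have "poly (p - monom (poly p z / z ^ k) k) z = 0"
        by (simp add: poly_monom)
      then show "z \<in> (\<Union>v\<in>?F. {z. poly (p - monom v k) z = 0})"
        using z by blast
    qed
    moreover have "finite (\<Union>v\<in>?F. {z. poly (p - monom v k) z = 0})"
      using fin not_monom by (intro finite_UN_I poly_roots_finite) auto
    ultimately show False
      using infinite_range_cis finite_subset by blast
  qed
  then show ?thesis
    using \<open>i \<noteq> k\<close> by (auto simp: coeff_monom)
qed

lemma finite_range_trace_herm_part_pow: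
  assumes X: "X \<in> carrier_mat n n" and "circularity X"
  shows "finite (range (\<lambda>\<theta>. trace (herm_part X \<theta> ^\<^sub>m k)))"
proof -
  let ?S = "spectrum (herm_part X 0)"
  have H: "herm_part X \<theta> \<in> carrier_mat n n" for \<theta>
    using X by (simp add: herm_part_def)
  have "range (\<lambda>\<theta>. trace (herm_part X \<theta> ^\<^sub>m k)) \<subseteq>
      (\<lambda>es. \<Sum>e\<leftarrow>es. e ^ k) ` {es. set es \<subseteq> ?S \<and> length es = n}" (is "_ \<subseteq> ?image")
  proof (rule image_subsetI)
    fix \<theta>
    obtain es where cp: "char_poly (herm_part X \<theta>) = (\<Prod>e\<leftarrow>es. [:- e, 1:])" and "length es = n"
      using char_poly_factorized[OF H] by auto
    moreover have "set es = ?S"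
      using spectrum_eq_set_if_char_poly_factorized[OF H cp] \<open>circularity X\<close> unfolding circularity_def by metis
    ultimately show "trace (herm_part X \<theta> ^\<^sub>m k) \<in> ?image"
      unfolding trace_pow_eq_sum_eigenvalues[OF H cp] by (intro image_eqI[where x = es]) simp_all
  qed
  moreover have "finite ?image"
    using finite_lists_length_eq[OF card_finite_spectrum(1)[OF H]] by (rule finite_imageI)
  ultimately show ?thesis
    by (rule finite_subset)
qed

lemma herm_trace_coeff_eq_0_if_gt:
  assumes "k < j" shows "herm_trace_coeff X k j = 0"
proof -
  have "count_list bs False \<noteq> j" if "length bs = k" for bs :: "bool list"
    using count_list_le_length[of bs False] that assms by simp
  then have "{bs. length bs = k \<and> count_list bs False = j} = {}"
    by blast
  then show ?thesis
    unfolding herm_trace_coeff_def by (simp only: sum.empty)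
qed

lemma herm_trace_coeff_eq_0_if_circularity:
  assumes X: "X \<in> carrier_mat n n" and "circularity X" and "2 * j \<noteq> k"
  shows "herm_trace_coeff X k j = 0"
proof (cases "j \<le> k")
  case True
  define q where "q = (\<Sum>i\<le>k. monom (herm_trace_coeff X k i) (2 * i))"
  have "poly q (cis \<theta>) / cis \<theta> ^ k = 2 ^ k * trace (herm_part X \<theta> ^\<^sub>m k)" for \<theta>
    using trace_herm_part_pow[OF X, of k \<theta>]
    by (simp add: q_def poly_sum poly_monom power_mult field_simps)
  then have "range (\<lambda>\<theta>. poly q (cis \<theta>) / cis \<theta> ^ k) =
      (*) (2 ^ k) ` range (\<lambda>\<theta>. trace (herm_part X \<theta> ^\<^sub>m k))"
    by (simp add: image_image)
  then have "finite (range (\<lambda>\<theta>. poly q (cis \<theta>) / cis \<theta> ^ k))"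
    using finite_range_trace_herm_part_pow[OF assms(1,2)] by simp
  then have "coeff q (2 * j) = 0"
    using \<open>2 * j \<noteq> k\<close> by (rule coeff_eq_0_if_finite_values_on_circle)
  then show ?thesis
    using True by (simp add: q_def coeff_sum coeff_monom)
qed (simp add: herm_trace_coeff_eq_0_if_gt)

lemma circularity_if_unbalanced_herm_trace_coeff_eq_0:
  assumes X: "X \<in> carrier_mat n n" and "n \<le> 4"
    and unbalanced: "\<And>k j. k \<le> 4 \<Longrightarrow> 2 * j \<noteq> k \<Longrightarrow> herm_trace_coeff X k j = 0"
  shows "circularity X"
proof -
  have H: "herm_part X \<theta> \<in> carrier_mat n n" for \<theta>
    using X by (simp add: herm_part_def)
  have trace_eq: "trace (herm_part X \<theta> ^\<^sub>m k) = (\<Sum>j\<le>k. if 2 * j = k then herm_trace_coeff X k j else 0) / 2 ^ k"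
    if "k \<le> 4" for k \<theta>
  proof -
    have "2 ^ k * cis \<theta> ^ k * trace (herm_part X \<theta> ^\<^sub>m k) =
        cis \<theta> ^ k * (\<Sum>j\<le>k. if 2 * j = k then herm_trace_coeff X k j else 0)"
      unfolding trace_herm_part_pow[OF X] sum_distrib_left
      by (rule sum.cong) (use unbalanced[OF that] in auto)
    then show ?thesis
      by (simp add: field_simps)
  qed
  show ?thesis
    unfolding circularity_def
  proof (intro allI)
    fix \<theta>1 \<theta>2
    have "char_poly (herm_part X \<theta>1) = char_poly (herm_part X \<theta>2)"
      using trace_eq by (intro char_poly_eq_if_trace_pow_eq[OF H H \<open>n \<le> 4\<close>]) simp
    then show "spectrum (herm_part X \<theta>1) = spectrum (herm_part X \<theta>2)"
      by (simp add: spectrum_root_char_poly[OF H])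
  qed
qed

lemma herm_trace_coeff_0:
  assumes X: "X \<in> carrier_mat n n"
  shows "herm_trace_coeff X k 0 = trace (X ^\<^sub>m k)"
  using X by (simp add: herm_trace_coeff_def bool_lists_without_False word_mat_replicate_True)

lemma herm_trace_coeff_conj:
  assumes X: "X \<in> carrier_mat n n" and "j \<le> k"
  shows "herm_trace_coeff X k (k - j) = cnj (herm_trace_coeff X k j)"
proof -
  let ?flip = "\<lambda>bs. rev (map Not bs)"
  have count_flip: "count_list (map Not bs) False = length bs - count_list bs False" for bs
    using count_list_True_False[of bs] by (induction bs) auto
  have flip_flip: "?flip (?flip bs) = bs" for bs
    by (simp add: rev_map comp_def)
  have trace_flip: "cnj (trace (word_mat n X (mat_adjoint X) (?flip bs))) = trace (word_mat n X (mat_adjoint X) bs)"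
    for bs
    using trace_mat_adjoint[OF word_mat_carrier[OF X mat_adjoint_carrier[OF X]], of bs] X
    by (simp add: mat_adjoint_word_mat)
  show ?thesis
    unfolding herm_trace_coeff_def cnj_sum
    by (rule sum.reindex_bij_witness[where i = ?flip and j = ?flip])
      (use X \<open>j \<le> k\<close> in \<open>auto simp: count_flip trace_flip flip_flip\<close>)
qed

lemma sum_rotate_nth:
  assumes "i < n" and closed: "\<And>xs j. xs \<in> W \<Longrightarrow> rotate j xs \<in> W"
    and len: "\<And>xs. xs \<in> W \<Longrightarrow> length xs = n"
  shows "(\<Sum>xs | xs \<in> W \<and> xs ! i = a. f (rotate i xs)) = (\<Sum>xs | xs \<in> W \<and> xs ! 0 = a. f xs)"
proof -
  have "n - i + i = n" "i + (n - i) = n"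
    using \<open>i < n\<close> by simp_all
  then have rot: "rotate (n - i) (rotate i xs) = xs" "rotate i (rotate (n - i) xs) = xs" if "xs \<in> W" for xs
    unfolding rotate_rotate using rotate_conv_mod[of "length xs" xs] len[OF that] by simp_all
  show ?thesis
    by (rule sum.reindex_bij_witness[where i = "rotate (n - i)" and j = "rotate i"])
      (use \<open>i < n\<close> rot closed len in \<open>auto simp: nth_rotate\<close>)
qed

text \<open>Each word with j + 1 letters X^* is counted once for each of its cyclic rotations that starts
  with X^*.\<close>

lemma herm_trace_coeff_Suc_Suc:
  assumes X: "X \<in> carrier_mat n n"
  shows "of_nat (Suc j) * herm_trace_coeff X (Suc k) (Suc j) = of_nat (Suc k) *
    (\<Sum>bs | length bs = k \<and> count_list bs False = j. trace (mat_adjoint X * word_mat n X (mat_adjoint X) bs))"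
proof -
  let ?t = "\<lambda>bs. trace (word_mat n X (mat_adjoint X) bs)"
  let ?W = "{bs. length bs = Suc k \<and> count_list bs False = Suc j}"
  let ?I = "\<lambda>bs. {i \<in> {..<Suc k}. bs ! i = False}"
  have X': "mat_adjoint X \<in> carrier_mat n n"
    using X by simp
  have finW: "finite ?W"
    using finite_lists_length_eq[of "UNIV :: bool set" "Suc k"] by (simp add: finite_subset)
  have "of_nat (Suc j) * herm_trace_coeff X (Suc k) (Suc j) = (\<Sum>bs\<in>?W. of_nat (card (?I bs)) * ?t bs)"
    using X unfolding herm_trace_coeff_def sum_distrib_left
    by (intro sum.cong) (auto simp: count_list_eq_length_filter length_filter_conv_card eq_commute)
  also have "\<dots> = (\<Sum>bs\<in>?W. \<Sum>i\<in>?I bs. ?t (rotate i bs))"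
    by (simp add: trace_word_mat_rotate[OF X X'])
  also have "\<dots> = (\<Sum>i<Suc k. \<Sum>bs | bs \<in> ?W \<and> bs ! i = False. ?t (rotate i bs))"
    using finW by (rule sum.swap_restrict) simp
  also have "\<dots> = (\<Sum>i<Suc k. \<Sum>u | u \<in> ?W \<and> u ! 0 = False. ?t u)"
    by (intro sum.cong refl sum_rotate_nth) (auto simp: count_list_rotate)
  also have "\<dots> = of_nat (Suc k) * (\<Sum>bs | length bs = k \<and> count_list bs False = j. ?t (False # bs))"
  proof -
    have "{u. u \<in> ?W \<and> u ! 0 = False} = Cons False ` {bs. length bs = k \<and> count_list bs False = j}"
      by (auto simp: length_Suc_conv)
    then show ?thesis
      by (simp add: sum.reindex)
  qed
  finally show ?thesis
    using X by simp
qed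

lemma herm_trace_coeff_1:
  assumes X: "X \<in> carrier_mat n n"
  shows "herm_trace_coeff X (Suc k) 1 = of_nat (Suc k) * trace (mat_adjoint X * X ^\<^sub>m k)"
  using herm_trace_coeff_Suc_Suc[OF X, of 0 k] X
  by (simp add: bool_lists_without_False word_mat_replicate_True)

lemma unbalanced_herm_trace_coeff_eq_0:
  assumes X: "X \<in> carrier_mat n n"
    and powers: "\<And>i. 0 < i \<Longrightarrow> trace (X ^\<^sub>m i) = 0"
    and "trace (mat_adjoint X * X ^\<^sub>m 2) = 0" "trace (mat_adjoint X * X ^\<^sub>m 3) = 0"
    and "k \<le> 4" "2 * j \<noteq> k"
  shows "herm_trace_coeff X k j = 0"
proof -
  have low: "herm_trace_coeff X k j = 0" if "j \<le> 1" "2 * j \<noteq> k" "k \<le> 4" for k j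
  proof (cases "j = 0")
    case True
    then show ?thesis
      using that powers by (simp add: herm_trace_coeff_0[OF X])
  next
    case False
    with that have "j = 1" "k \<in> {0, 1, 3, 4}"
      by auto
    moreover have "trace (mat_adjoint X * X ^\<^sub>m 0) = 0"
      using X powers[of 1] by (simp add: trace_mat_adjoint)
    ultimately show ?thesis
      using assms(3,4) herm_trace_coeff_1[OF X] herm_trace_coeff_eq_0_if_gt[of 0 1 X]
      by (auto simp: numeral_eq_Suc)
  qed
  show ?thesis
  proof (cases "j \<le> 1 \<or> k < j")
    case True
    then show ?thesis
      using low assms(5,6) herm_trace_coeff_eq_0_if_gt by blast
  next
    case False
    then have "k - j \<le> 1" "2 * (k - j) \<noteq> k" "k - (k - j) = j"
      using assms(5,6) by auto
    then show ?thesis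
      using herm_trace_coeff_conj[OF X, of "k - j" k] low assms(5) by simp
  qed
qed

section \<open>The block form of a partial isometry\<close>

definition corner_mat :: "nat \<Rightarrow> 'a::zero mat \<Rightarrow> 'a mat" where
  "corner_mat m D = four_block_mat (0\<^sub>m m m) (0\<^sub>m m (dim_col D)) (0\<^sub>m (dim_row D) m) D"

lemma dim_corner_mat[simp]:
  "dim_row (corner_mat m D) = m + dim_row D" "dim_col (corner_mat m D) = m + dim_col D"
  by (simp_all add: corner_mat_def)

lemma corner_mat_carrier[simp]: "D \<in> carrier_mat d d \<Longrightarrow> corner_mat m D \<in> carrier_mat (m + d) (m + d)"
  by (intro carrier_matI) auto

lemma index_corner_mat_lower_right:
  "i < dim_row D \<Longrightarrow> j < dim_col D \<Longrightarrow> corner_mat m D $$ (m + i, m + j) = D $$ (i, j)"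
  by (simp add: corner_mat_def)

lemma corner_mat_mult:
  fixes D E :: "'a::semiring_0 mat"
  assumes "D \<in> carrier_mat d d" "E \<in> carrier_mat d d"
  shows "corner_mat m D * corner_mat m E = corner_mat m (D * E)"
  using assms by (simp add: corner_mat_def mult_four_block_mat[of _ m m _ d _ d _ _ m _ d])

lemma trace_corner_mat:
  fixes D :: "'a::comm_monoid_add mat"
  assumes D: "D \<in> carrier_mat d d"
  shows "trace (corner_mat m D) = trace D"
proof -
  have "trace (corner_mat m D) = (\<Sum>i\<in>{..<m} \<union> {m..<m + d}. corner_mat m D $$ (i,i))"
    using D unfolding trace_def by (intro sum.cong) auto
  also have "\<dots> = (\<Sum>i\<in>{m..<m + d}. corner_mat m D $$ (i,i))"
    using D by (subst sum.union_disjoint) (auto simp: corner_mat_def)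
  also have "\<dots> = trace D"
    using D unfolding trace_def
    by (intro sum.reindex_bij_witness[where i = "\<lambda>i. m + i" and j = "\<lambda>i. i - m"])
      (auto simp: corner_mat_def)
  finally show ?thesis .
qed

locale partial_isometry_block =
  fixes B C :: "complex mat" and m d :: nat
  assumes B: "B \<in> carrier_mat m d" and C: "C \<in> carrier_mat d d"
    and isometry: "mat_adjoint B * B + mat_adjoint C * C = 1\<^sub>m d"
begin

abbreviation A :: "complex mat" where
  "A \<equiv> four_block_mat (0\<^sub>m m m) B (0\<^sub>m d m) C"

lemma A_carrier: "A \<in> carrier_mat (m + d) (m + d)"
  using B C by simp

lemma adjoint_A_carrier: "mat_adjoint A \<in> carrier_mat (m + d) (m + d)"
  using A_carrier by simp

lemma mat_adjoint_A: "mat_adjoint A = four_block_mat (0\<^sub>m m m) (0\<^sub>m m d) (mat_adjoint B) (mat_adjoint C)"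
  using B C by (simp add: mat_adjoint_four_block_mat[of _ m m _ d _ d])

lemma adjoint_A_mult_A: "mat_adjoint A * A = corner_mat m (1\<^sub>m d)"
  unfolding mat_adjoint_A corner_mat_def using B C
  by (simp add: mult_four_block_mat[of _ m m _ d _ d _ _ m _ d] isometry)

lemma corner_mat_mult_A: "D \<in> carrier_mat d d \<Longrightarrow> corner_mat m D * A = corner_mat m (D * C)"
  unfolding corner_mat_def using B C
  by (simp add: mult_four_block_mat[of _ m m _ d _ d _ _ m _ d])

lemma adjoint_A_mult_corner_mat:
  assumes D: "D \<in> carrier_mat d d"
  shows "mat_adjoint A * corner_mat m D = corner_mat m (mat_adjoint C * D)"
proof -
  have "mat_adjoint C * D \<in> carrier_mat d d"
    using mult_carrier_mat[OF mat_adjoint_carrier[OF C] D] .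
  then show ?thesis
    unfolding corner_mat_def mat_adjoint_A using B C D
    by (simp add: mult_four_block_mat[of _ m m _ d _ d _ _ m _ d])
qed

lemma adjoint_A_mult_pow_A: "mat_adjoint A * A ^\<^sub>m Suc p = corner_mat m (C ^\<^sub>m p)"
proof (induction p)
  case 0
  then show ?case
    using A_carrier C by (simp add: adjoint_A_mult_A)
next
  case (Suc p)
  have "mat_adjoint A * A ^\<^sub>m Suc (Suc p) = mat_adjoint A * A ^\<^sub>m Suc p * A"
    using assoc_mult_mat[OF adjoint_A_carrier pow_carrier_mat[OF A_carrier] A_carrier, of "Suc p"]
    by (metis pow_mat.simps(2))
  also have "\<dots> = corner_mat m (C ^\<^sub>m p) * A"
    by (simp only: Suc.IH)
  also have "\<dots> = corner_mat m (C ^\<^sub>m Suc p)"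
    using C by (simp add: corner_mat_mult_A)
  finally show ?case .
qed

lemma pow_C_eq_0_if_pow_A_eq_0:
  assumes "A ^\<^sub>m k = 0\<^sub>m (m + d) (m + d)"
  shows "C ^\<^sub>m k = 0\<^sub>m d d"
proof -
  have "corner_mat m (C ^\<^sub>m k) = mat_adjoint A * (A ^\<^sub>m k * A)"
    using adjoint_A_mult_pow_A[of k] by simp
  also have "\<dots> = 0\<^sub>m (m + d) (m + d)"
    using assms by (simp add: left_mult_zero_mat[OF A_carrier] right_mult_zero_mat[OF adjoint_A_carrier])
  finally have zero: "corner_mat m (C ^\<^sub>m k) = 0\<^sub>m (m + d) (m + d)" .
  show ?thesis
  proof (rule eq_matI)
    fix i j assume "i < dim_row (0\<^sub>m d d :: complex mat)" "j < dim_col (0\<^sub>m d d :: complex mat)"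
    then have "(C ^\<^sub>m k) $$ (i, j) = corner_mat m (C ^\<^sub>m k) $$ (m + i, m + j)"
      using C by (simp add: index_corner_mat_lower_right)
    then show "(C ^\<^sub>m k) $$ (i, j) = 0\<^sub>m d d $$ (i, j)"
      using zero \<open>i < _\<close> \<open>j < _\<close> by simp
  qed (use C in simp_all)
qed

lemma word_mat_one_adjoint:
  "word_mat (m + d) A (mat_adjoint A) (replicate p True @ False # replicate q True) =
    A ^\<^sub>m p * (mat_adjoint A * A ^\<^sub>m q)"
  by (simp add: word_mat_append[OF A_carrier adjoint_A_carrier] word_mat_replicate_True[OF A_carrier adjoint_A_carrier])

lemma trace_words_two_adjoints:
  "trace (mat_adjoint A * (mat_adjoint A * A ^\<^sub>m Suc q)) = trace (mat_adjoint C * C ^\<^sub>m q)"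
  "trace (mat_adjoint A * (A ^\<^sub>m Suc p * mat_adjoint A)) = trace (mat_adjoint C * C ^\<^sub>m p)"
  "trace (mat_adjoint A * A ^\<^sub>m Suc p * (mat_adjoint A * A ^\<^sub>m Suc q)) = trace (C ^\<^sub>m (p + q))"
proof -
  have adj_pow: "mat_adjoint C * C ^\<^sub>m i \<in> carrier_mat d d" for i
    using mult_carrier_mat[OF mat_adjoint_carrier[OF C] pow_carrier_mat[OF C]] .
  show "trace (mat_adjoint A * (mat_adjoint A * A ^\<^sub>m Suc q)) = trace (mat_adjoint C * C ^\<^sub>m q)"
    unfolding adjoint_A_mult_pow_A using C by (simp add: adjoint_A_mult_corner_mat trace_corner_mat[OF adj_pow])
  have X: "mat_adjoint A * A ^\<^sub>m Suc p \<in> carrier_mat (m + d) (m + d)"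
    using mult_carrier_mat[OF adjoint_A_carrier pow_carrier_mat[OF A_carrier]] .
  have "trace (mat_adjoint A * (A ^\<^sub>m Suc p * mat_adjoint A)) =
      trace (mat_adjoint A * A ^\<^sub>m Suc p * mat_adjoint A)"
    by (simp only: assoc_mult_mat[OF adjoint_A_carrier pow_carrier_mat[OF A_carrier] adjoint_A_carrier])
  also have "\<dots> = trace (mat_adjoint A * (mat_adjoint A * A ^\<^sub>m Suc p))"
    by (rule trace_mult_comm[OF X adjoint_A_carrier])
  also have "\<dots> = trace (mat_adjoint C * C ^\<^sub>m p)"
    unfolding adjoint_A_mult_pow_A using C by (simp add: adjoint_A_mult_corner_mat trace_corner_mat[OF adj_pow])
  finally show "trace (mat_adjoint A * (A ^\<^sub>m Suc p * mat_adjoint A)) = trace (mat_adjoint C * C ^\<^sub>m p)" .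
  show "trace (mat_adjoint A * A ^\<^sub>m Suc p * (mat_adjoint A * A ^\<^sub>m Suc q)) = trace (C ^\<^sub>m (p + q))"
    unfolding adjoint_A_mult_pow_A corner_mat_mult[OF pow_carrier_mat[OF C] pow_carrier_mat[OF C]]
    using C by (simp add: trace_corner_mat[OF pow_carrier_mat[OF C]] pow_mat_add)
qed

lemma herm_trace_coeff_A_2:
  "2 * herm_trace_coeff A (k + 3) 2 =
    of_nat (k + 3) * (2 * trace (mat_adjoint C * C ^\<^sub>m k) + of_nat k * trace (C ^\<^sub>m (k - 1)))"
proof -
  let ?f = "\<lambda>p. trace (mat_adjoint A * (A ^\<^sub>m p * (mat_adjoint A * A ^\<^sub>m (Suc k - p))))"
  have "2 * herm_trace_coeff A (k + 3) 2 = of_nat (k + 3) * (\<Sum>bs | length bs = Suc (Suc k) \<and> count_list bs False = 1.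
      trace (mat_adjoint A * word_mat (m + d) A (mat_adjoint A) bs))"
    using herm_trace_coeff_Suc_Suc[OF A_carrier, of 1 "Suc (Suc k)"] by (simp add: numeral_eq_Suc)
  also have "\<dots> = of_nat (k + 3) * (\<Sum>p\<le>Suc k. ?f p)"
    by (simp only: sum_bool_lists_one_False word_mat_one_adjoint)
  also have "(\<Sum>p\<le>Suc k. ?f p) = ?f 0 + (\<Sum>p<k. ?f (Suc p)) + ?f (Suc k)"
    unfolding sum.atMost_Suc unfolding lessThan_Suc_atMost[symmetric] sum.lessThan_Suc_shift ..
  also have "\<dots> = 2 * trace (mat_adjoint C * C ^\<^sub>m k) + of_nat k * trace (C ^\<^sub>m (k - 1))"
  proof -
    have "?f (Suc p) = trace (C ^\<^sub>m (k - 1))" if "p < k" for p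
    proof -
      have "Suc k - Suc p = Suc (k - Suc p)"
        using that by simp
      then have "?f (Suc p) = trace (mat_adjoint A * A ^\<^sub>m Suc p * (mat_adjoint A * A ^\<^sub>m Suc (k - Suc p)))"
        by (simp only: assoc_mult_mat[OF adjoint_A_carrier pow_carrier_mat[OF A_carrier]
              mult_carrier_mat[OF adjoint_A_carrier pow_carrier_mat[OF A_carrier]]])
      also have "\<dots> = trace (C ^\<^sub>m (k - 1))"
        using that by (simp only: trace_words_two_adjoints(3)) simp
      finally show ?thesis .
    qed
    then show ?thesis
      using trace_words_two_adjoints(1,2)[of k] A_carrier adjoint_A_carrier C
      by (simp add: left_mult_one_mat[OF mult_carrier_mat[OF adjoint_A_carrier pow_carrier_mat[OF A_carrier]]])
  qed
  finally show ?thesis .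
qed

lemma trace_adjoint_C_mult_pow_C_eq_0:
  assumes "circularity A" and traces: "\<And>i. 0 < i \<Longrightarrow> trace (C ^\<^sub>m i) = 0" and "k \<noteq> 1"
  shows "trace (mat_adjoint C * C ^\<^sub>m k) = 0"
proof -
  have coeff: "herm_trace_coeff A (k + 3) 2 = 0"
    using herm_trace_coeff_eq_0_if_circularity[OF A_carrier \<open>circularity A\<close>] \<open>k \<noteq> 1\<close> by simp
  have lower: "of_nat k * trace (C ^\<^sub>m (k - 1)) = 0"
    using traces[of "k - 1"] \<open>k \<noteq> 1\<close> by (cases "k = 0") auto
  have "of_nat (k + 3) * (2 * trace (mat_adjoint C * C ^\<^sub>m k)) = 0"
    using herm_trace_coeff_A_2[of k, unfolded coeff lower] by simp
  moreover have "(of_nat (k + 3) :: complex) \<noteq> 0"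
    by (simp only: of_nat_eq_0_iff)
  ultimately show ?thesis
    by (metis mult_eq_0_iff zero_neq_numeral)
qed

end

theorem mainTheorem11:
  fixes B C :: "complex mat" and m d :: nat
  assumes "B \<in> carrier_mat m d" and "C \<in> carrier_mat d d"
    and "mat_adjoint B * B + mat_adjoint C * C = 1\<^sub>m d"
    and "d \<le> 4"
    and "unitarily_irreducible (four_block_mat (0\<^sub>m m m) B (0\<^sub>m d m) C)"
    and "nilpotent_mat (four_block_mat (0\<^sub>m m m) B (0\<^sub>m d m) C)"
    and "circularity (four_block_mat (0\<^sub>m m m) B (0\<^sub>m d m) C)"
  shows "circularity C"
proof -
  interpret partial_isometry_block B C m d
    using assms(1-3) by unfold_locales
  obtain k where "A ^\<^sub>m k = 0\<^sub>m (m + d) (m + d)"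
    using assms(6) A_carrier unfolding nilpotent_mat_def by auto
  then have traces: "\<And>i. 0 < i \<Longrightarrow> trace (C ^\<^sub>m i) = 0"
    using trace_pow_eq_0_if_nilpotent[OF C pow_C_eq_0_if_pow_A_eq_0] by blast
  have "trace (mat_adjoint C * C ^\<^sub>m 2) = 0" "trace (mat_adjoint C * C ^\<^sub>m 3) = 0"
    using trace_adjoint_C_mult_pow_C_eq_0[OF assms(7) traces] by simp_all
  then show ?thesis
    using circularity_if_unbalanced_herm_trace_coeff_eq_0[OF C \<open>d \<le> 4\<close>]
      unbalanced_herm_trace_coeff_eq_0[OF C traces] by blast
qed

end
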